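(* Let $\lambda/\mu$ be a connected r-shape with column flags $\mathbf a,\mathbf b$, and let $\Theta=(\theta_1,\ldots,\theta_k)$ be an outer ribbon decomposition of $\lambda/\mu$. For every $i,j$ such that $\theta_i\#\theta_j$ is defined and nonempty, the induced ribbon flags $\mathbf a^{ij},\mathbf b^{ij}$ are column flags for the r-shape $\theta_i\#\theta_j$.
   Context: Young diagrams in English notation; $\mathrm{row}(\gamma),\mathrm{col}(\gamma)$ the row and column of a cell. An r-shape is $(\lambda/\mu,r)$, $r\in\mathbb Z$, with shifted contents $c(i,j)=j-i+r-1+\lambda'_1$ (bottom-left cell content $r$); connected means edgewise connected diagram. Column flags for an r-shape $\kappa/\nu$ with $N\ge\kappa_1$: $\mathbf a,\mathbf b\in\mathbb Z^N$ with $a_i-a_{i+1}\le\nu'_i-\nu'_{i+1}+1$ and $b_i-b_{i+1}\le\kappa'_i-\kappa'_{i+1}+1$ whenever $\nu'_i<\kappa'_{i+1}$. A ribbon is an edgewise connected skew diagram with no $2\times2$ block; head = bottom-left cell, tail = top-right cell. A cell of $\lambda/\mu$ is on the top (right, bottom, left) perimeter if the cell directly above (right, below, left) is not in $\lambda/\mu$. An outer ribbon decomposition $(\theta_1,\ldots,\theta_k)$ of $\lambda/\mu$ partitions its cells into ribbons with each head on the left or bottom perimeter and each tail on the top or right perimeter. A cell $\gamma\in\theta_i$ goes up if the cell directly above is in $\theta_i$ or $\gamma$ is the tail of $\theta_i$ on the top perimeter; goes right if the cell directly to its right is in $\theta_i$ or $\gamma$ is the tail of $\theta_i$ on the right perimeter;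 the top-right cell of $\lambda/\mu$ (in $\theta_i$) goes up if the cell directly below is in $\theta_i$ and right if the cell directly to its left is in $\theta_i$. All cells of a given content go in the same direction. The cutting strip is the ribbon whose cells have exactly the contents occurring in $\lambda/\mu$, with the cell of content $c+1$ directly above (resp. right of) that of content $c$ when the cells of content $c$ go up (resp. right). $\Theta(p,q)$ is its sub-ribbon of contents in $[p,q]$, an r-shape with root content $p$; it is $\varnothing$ if $p=q+1$ and undefined if $p>q+1$. $\theta_i\#\theta_j=\Theta(c(\delta_i),c(\gamma_j))$ with $\delta_i$ the head of $\theta_i$, $\gamma_j$ the tail of $\theta_j$. Canonical decomposition: $\theta=\rho_1\to\cdots\to\rho_K$ with $\rho_r$ the maximal vertical strips (column segments) of $\theta$ from left to right. Induced ribbon flags of $\theta_i\#\theta_j=\rho_1\to\cdots\to\rho_K$: with $\delta_r,\gamma_r$ the bottom and top cells of $\rho_r$, $M_r$ the rightmost cell of $\lambda/\mu$ of content $c(\delta_r)$, $m_r$ the leftmost cell of $\lambda/\mu$ of content $c(\gamma_r)$ (rows/columns measured in $\lambda/\mu$): $a^{ij}_r=a_{\mathrm{col}(m_r)}-(\mu'_{\mathrm{col}(m_r)}+1)+\mathrm{row}(m_r)$, $b^{ij}_r=b_{\mathrm{col}(M_r)}-\lambda'_{\mathrm{col}(M_r)}+\mathrm{row}(M_r)$. *)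

theory Defs
  imports Main
begin

definition partition :: "nat list \<Rightarrow> bool" where
  "partition lam \<longleftrightarrow> sorted_wrt (\<ge>) lam"

definition part_at :: "nat list \<Rightarrow> nat \<Rightarrow> nat" where
  "part_at lam i = (if 1 \<le> i \<and> i \<le> length lam then lam ! (i - 1) else 0)"

(* conjugate partition: lambda'_j = number of rows of length >= j  (used for j >= 1) *)
definition conj_part :: "nat list \<Rightarrow> nat \<Rightarrow> nat" where
  "conj_part lam j = card {i. 1 \<le> i \<and> i \<le> length lam \<and> j \<le> part_at lam i}"

definition skew :: "nat list \<Rightarrow> nat list \<Rightarrow> (nat \<times> nat) set" where
  "skew lam mu = {(i, j). 1 \<le> i \<and> 1 \<le> j \<and> part_at mu i < j \<and> j \<le> part_at lam i}"

definition content :: "nat list \<Rightarrow> int \<Rightarrow> nat \<times> nat \<Rightarrow> int" where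
  "content lam r c = int (snd c) - int (fst c) + r - 1 + int (conj_part lam 1)"

definition adjacent :: "nat \<times> nat \<Rightarrow> nat \<times> nat \<Rightarrow> bool" where
  "adjacent x y \<longleftrightarrow>
     (fst x = fst y \<and> (snd y = snd x + 1 \<or> snd x = snd y + 1)) \<or>
     (snd x = snd y \<and> (fst y = fst x + 1 \<or> fst x = fst y + 1))"

definition edge_connected :: "(nat \<times> nat) set \<Rightarrow> bool" where
  "edge_connected S \<longleftrightarrow> S \<noteq> {} \<and>
     (\<forall>x\<in>S. \<forall>y\<in>S. (x, y) \<in> {(u, v). u \<in> S \<and> v \<in> S \<and> adjacent u v}\<^sup>*)"

(* a connected r-shape lam/mu (the integer r plays no role in this predicate) *)
definition connected_rshape :: "nat list \<Rightarrow> nat list \<Rightarrow> bool" where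
  "connected_rshape lam mu \<longleftrightarrow> partition lam \<and> partition mu \<and>
     (\<forall>i. part_at mu i \<le> part_at lam i) \<and> edge_connected (skew lam mu)"

(* column flags a, b in Z^N (indices 1..N) for the r-shape kappa/nu *)
definition column_flags :: "nat list \<Rightarrow> nat list \<Rightarrow> nat \<Rightarrow> (nat \<Rightarrow> int) \<Rightarrow> (nat \<Rightarrow> int) \<Rightarrow> bool" where
  "column_flags kappa nu N a b \<longleftrightarrow> part_at kappa 1 \<le> N \<and>
     (\<forall>i. 1 \<le> i \<and> i < N \<and> conj_part nu i < conj_part kappa (i + 1) \<longrightarrow>
        a i - a (i + 1) \<le> int (conj_part nu i) - int (conj_part nu (i + 1)) + 1 \<and>
        b i - b (i + 1) \<le> int (conj_part kappa i) - int (conj_part kappa (i + 1)) + 1)"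

definition is_skew_diagram :: "(nat \<times> nat) set \<Rightarrow> bool" where
  "is_skew_diagram S \<longleftrightarrow> (\<exists>kappa nu. partition kappa \<and> partition nu \<and> S = skew kappa nu)"

definition is_ribbon :: "(nat \<times> nat) set \<Rightarrow> bool" where
  "is_ribbon S \<longleftrightarrow> is_skew_diagram S \<and> edge_connected S \<and>
     \<not> (\<exists>i j. (i, j) \<in> S \<and> (i + 1, j) \<in> S \<and> (i, j + 1) \<in> S \<and> (i + 1, j + 1) \<in> S)"

definition head :: "(nat \<times> nat) set \<Rightarrow> nat \<times> nat" where
  "head S = (THE x. x \<in> S \<and> (\<forall>y\<in>S. fst y \<le> fst x) \<and> (\<forall>y\<in>S. fst y = fst x \<longrightarrow> snd x \<le> snd y))"

definition tail :: "(nat \<times> nat) set \<Rightarrow> nat \<times> nat" where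
  "tail S = (THE x. x \<in> S \<and> (\<forall>y\<in>S. fst x \<le> fst y) \<and> (\<forall>y\<in>S. fst y = fst x \<longrightarrow> snd y \<le> snd x))"

(* perimeters of a set of cells S (cells have coordinates >= 1) *)
definition on_top :: "(nat \<times> nat) set \<Rightarrow> nat \<times> nat \<Rightarrow> bool" where
  "on_top S c \<longleftrightarrow> (fst c - 1, snd c) \<notin> S"
definition on_bottom :: "(nat \<times> nat) set \<Rightarrow> nat \<times> nat \<Rightarrow> bool" where
  "on_bottom S c \<longleftrightarrow> (fst c + 1, snd c) \<notin> S"
definition on_left :: "(nat \<times> nat) set \<Rightarrow> nat \<times> nat \<Rightarrow> bool" where
  "on_left S c \<longleftrightarrow> (fst c, snd c - 1) \<notin> S"
definition on_right :: "(nat \<times> nat) set \<Rightarrow> nat \<times> nat \<Rightarrow> bool" where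
  "on_right S c \<longleftrightarrow> (fst c, snd c + 1) \<notin> S"

(* outer ribbon decomposition (theta_1,...,theta_k) = list thetas (0-indexed) *)
definition outer_ribbon_decomp :: "nat list \<Rightarrow> nat list \<Rightarrow> (nat \<times> nat) set list \<Rightarrow> bool" where
  "outer_ribbon_decomp lam mu thetas \<longleftrightarrow>
     (\<forall>th\<in>set thetas. is_ribbon th \<and> th \<subseteq> skew lam mu \<and>
        (on_left (skew lam mu) (head th) \<or> on_bottom (skew lam mu) (head th)) \<and>
        (on_top (skew lam mu) (tail th) \<or> on_right (skew lam mu) (tail th))) \<and>
     (\<forall>i<length thetas. \<forall>j<length thetas. i \<noteq> j \<longrightarrow> thetas ! i \<inter> thetas ! j = {}) \<and>
     \<Union> (set thetas) = skew lam mu"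

definition goes_up :: "nat list \<Rightarrow> nat list \<Rightarrow> (nat \<times> nat) set \<Rightarrow> nat \<times> nat \<Rightarrow> bool" where
  "goes_up lam mu th g \<longleftrightarrow>
     (if g = tail (skew lam mu) then (fst g + 1, snd g) \<in> th
      else (fst g - 1, snd g) \<in> th \<or> (g = tail th \<and> on_top (skew lam mu) g))"

definition goes_right :: "nat list \<Rightarrow> nat list \<Rightarrow> (nat \<times> nat) set \<Rightarrow> nat \<times> nat \<Rightarrow> bool" where
  "goes_right lam mu th g \<longleftrightarrow>
     (if g = tail (skew lam mu) then (fst g, snd g - 1) \<in> th
      else (fst g, snd g + 1) \<in> th \<or> (g = tail th \<and> on_right (skew lam mu) g))"

definition content_goes_up :: "nat list \<Rightarrow> nat list \<Rightarrow> int \<Rightarrow> (nat \<times> nat) set list \<Rightarrow> int \<Rightarrow> bool" where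
  "content_goes_up lam mu r thetas c \<longleftrightarrow>
     (\<exists>th\<in>set thetas. \<exists>g\<in>th. content lam r g = c \<and> goes_up lam mu th g)"

(* position (row, column) in Z^2 of the n-th cell of a strip starting at content c0 at (0,0):
   the next cell is directly above if the current content goes up, otherwise to the right *)
fun strip_pos :: "(int \<Rightarrow> bool) \<Rightarrow> int \<Rightarrow> nat \<Rightarrow> int \<times> int" where
  "strip_pos up c0 0 = (0, 0)"
| "strip_pos up c0 (Suc n) =
     (if up (c0 + int n) then (fst (strip_pos up c0 n) - 1, snd (strip_pos up c0 n))
      else (fst (strip_pos up c0 n), snd (strip_pos up c0 n) + 1))"

definition min_content :: "nat list \<Rightarrow> nat list \<Rightarrow> int \<Rightarrow> int" where
  "min_content lam mu r = Min (content lam r ` skew lam mu)"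

definition cut_cell :: "nat list \<Rightarrow> nat list \<Rightarrow> int \<Rightarrow> (nat \<times> nat) set list \<Rightarrow> int \<Rightarrow> int \<times> int" where
  "cut_cell lam mu r thetas c =
     strip_pos (content_goes_up lam mu r thetas) (min_content lam mu r) (nat (c - min_content lam mu r))"

definition Theta_seg :: "nat list \<Rightarrow> nat list \<Rightarrow> int \<Rightarrow> (nat \<times> nat) set list \<Rightarrow> int \<Rightarrow> int \<Rightarrow> (int \<times> int) set" where
  "Theta_seg lam mu r thetas p q = cut_cell lam mu r thetas ` {p..q}"

definition normalize :: "(int \<times> int) set \<Rightarrow> (nat \<times> nat) set" where
  "normalize S = (\<lambda>(x, y). (nat (x - Min (fst ` S) + 1), nat (y - Min (snd ` S) + 1))) ` S"

(* the skew shape kappa/nu (without empty rows) whose diagram is the normalized set S *)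
definition shape_rows :: "(nat \<times> nat) set \<Rightarrow> nat" where
  "shape_rows S = Max (fst ` S)"
definition shape_kappa :: "(nat \<times> nat) set \<Rightarrow> nat list" where
  "shape_kappa S = map (\<lambda>i. Max {j. (i, j) \<in> S}) [1..<shape_rows S + 1]"
definition shape_nu :: "(nat \<times> nat) set \<Rightarrow> nat list" where
  "shape_nu S = map (\<lambda>i. Min {j. (i, j) \<in> S} - 1) [1..<shape_rows S + 1]"
definition shape_cols :: "(nat \<times> nat) set \<Rightarrow> nat" where
  "shape_cols S = Max (snd ` S)"

definition hash_p :: "nat list \<Rightarrow> int \<Rightarrow> (nat \<times> nat) set list \<Rightarrow> nat \<Rightarrow> int" where
  "hash_p lam r thetas i = content lam r (head (thetas ! i))"
definition hash_q :: "nat list \<Rightarrow> int \<Rightarrow> (nat \<times> nat) set list \<Rightarrow> nat \<Rightarrow> int" where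
  "hash_q lam r thetas j = content lam r (tail (thetas ! j))"

(* the diagram of the r-shape theta_i # theta_j = Theta(p,q), with root content p *)
definition hash_cells :: "nat list \<Rightarrow> nat list \<Rightarrow> int \<Rightarrow> (nat \<times> nat) set list \<Rightarrow> nat \<Rightarrow> nat \<Rightarrow> (nat \<times> nat) set" where
  "hash_cells lam mu r thetas i j =
     normalize (Theta_seg lam mu r thetas (hash_p lam r thetas i) (hash_q lam r thetas j))"

definition rightmost_of :: "nat list \<Rightarrow> nat list \<Rightarrow> int \<Rightarrow> int \<Rightarrow> nat \<times> nat" where
  "rightmost_of lam mu r c = (THE x. x \<in> skew lam mu \<and> content lam r x = c \<and>
     (\<forall>y\<in>skew lam mu. content lam r y = c \<longrightarrow> snd y \<le> snd x))"
definition leftmost_of :: "nat list \<Rightarrow> nat list \<Rightarrow> int \<Rightarrow> int \<Rightarrow> nat \<times> nat" where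
  "leftmost_of lam mu r c = (THE x. x \<in> skew lam mu \<and> content lam r x = c \<and>
     (\<forall>y\<in>skew lam mu. content lam r y = c \<longrightarrow> snd x \<le> snd y))"

(* induced ribbon flags a^{ij}_rho, b^{ij}_rho, rho = 1..K.
   delta_rho / gamma_rho = bottom / top cell of column rho of the ribbon; their contents are
   taken in the r-shape (kappa/nu, p). *)
definition induced_a :: "nat list \<Rightarrow> nat list \<Rightarrow> int \<Rightarrow> (nat \<times> nat) set list \<Rightarrow> (nat \<Rightarrow> int) \<Rightarrow> nat \<Rightarrow> nat \<Rightarrow> nat \<Rightarrow> int" where
  "induced_a lam mu r thetas a i j rho =
     (let S = hash_cells lam mu r thetas i j;
          gam = (Min {x. (x, rho) \<in> S}, rho);
          m = leftmost_of lam mu r (content (shape_kappa S) (hash_p lam r thetas i) gam)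
      in a (snd m) - (int (conj_part mu (snd m)) + 1) + int (fst m))"

definition induced_b :: "nat list \<Rightarrow> nat list \<Rightarrow> int \<Rightarrow> (nat \<times> nat) set list \<Rightarrow> (nat \<Rightarrow> int) \<Rightarrow> nat \<Rightarrow> nat \<Rightarrow> nat \<Rightarrow> int" where
  "induced_b lam mu r thetas b i j rho =
     (let S = hash_cells lam mu r thetas i j;
          del = (Max {x. (x, rho) \<in> S}, rho);
          M = rightmost_of lam mu r (content (shape_kappa S) (hash_p lam r thetas i) del)
      in b (snd M) - int (conj_part lam (snd M)) + int (fst M))"

end

theory Submission
  imports Defs
begin

text \<open>The cells of \<open>\<Theta>(p,q)\<close> lie pairwise in north-east/south-west position, so the conjugates
  of \<open>\<theta>\<^sub>i#\<theta>\<^sub>j = \<kappa>/\<nu>\<close> are read off its columns: \<open>\<nu>'\<^sub>\<rho> + 1\<close> and \<open>\<kappa>'\<^sub>\<rho>\<close> are the rows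
  of the top and bottom cells \<open>\<gamma>\<^sub>\<rho>\<close>, \<open>\<delta>\<^sub>\<rho>\<close> of column \<open>\<rho>\<close>. The flag inequalities for the
  columns \<open>\<rho>, \<rho>+1\<close> thus bound \<open>a\<^sup>i\<^sup>j\<^sub>\<rho> - a\<^sup>i\<^sup>j\<^sub>\<rho>\<^sub>+\<^sub>1\<close> by \<open>c(\<gamma>\<^sub>\<rho>\<^sub>+\<^sub>1) - c(\<gamma>\<^sub>\<rho>)\<close>, and
  likewise for \<open>b\<close> with \<open>\<delta>\<close>. These contents lie in \<open>[p,q]\<close>, hence occur in the connected shape
  \<open>\<lambda>/\<mu>\<close>. As the content grows, its leftmost (rightmost) cell in \<open>\<lambda>/\<mu>\<close> moves weakly right,
  and between the columns of two cells of \<open>\<lambda>/\<mu>\<close> connectedness gives \<open>\<mu>'\<^sub>t < \<lambda>'\<^sub>t\<^sub>+\<^sub>1\<close>;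
  there the column flags make \<open>a\<^sub>t - \<mu>'\<^sub>t + t\<close> and \<open>b\<^sub>t - \<lambda>'\<^sub>t + t\<close> weakly increasing, and
  telescoping gives the bounds.\<close>

section \<open>Partitions and skew diagrams\<close>

lemma part_at_antimono:
  assumes "partition lam" "1 \<le> i" "i \<le> i'"
  shows "part_at lam i' \<le> part_at lam i"
proof (cases "i < i' \<and> i' \<le> length lam")
  case True
  then have "i - 1 < i' - 1" "i' - 1 < length lam" using assms by auto
  then have "lam ! (i' - 1) \<le> lam ! (i - 1)"
    using assms(1) sorted_wrt_nth_less[of "(\<ge>)" lam] unfolding partition_def by blast
  then show ?thesis using True assms unfolding part_at_def by simp
qed (use assms in \<open>auto simp: part_at_def\<close>)

lemma conj_part_eqI:
  assumes "k \<le> length lam" "\<And>i. 1 \<le> i \<Longrightarrow> i \<le> length lam \<Longrightarrow> t \<le> part_at lam i \<longleftrightarrow> i \<le> k"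
  shows "conj_part lam t = k"
proof -
  have "{i. 1 \<le> i \<and> i \<le> length lam \<and> t \<le> part_at lam i} = {1..k}"
    using assms by auto
  then show ?thesis unfolding conj_part_def by simp
qed

lemma le_conj_part_iff:
  assumes "partition lam" "1 \<le> t" "1 \<le> i"
  shows "t \<le> part_at lam i \<longleftrightarrow> i \<le> conj_part lam t"
proof -
  define A where "A = {i. 1 \<le> i \<and> i \<le> length lam \<and> t \<le> part_at lam i}"
  have "finite A" unfolding A_def by (rule finite_subset[of _ "{1..length lam}"]) auto
  have down_closed: "i' \<in> A" if "i \<in> A" "1 \<le> i'" "i' \<le> i" for i i'
  proof -
    have "part_at lam i \<le> part_at lam i'" using part_at_antimono[OF assms(1) that(2,3)] .
    then show ?thesis using that unfolding A_def by simp
  qed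
  have "A = {1..card A}"
  proof (cases "A = {}")
    case False
    have "Max A \<in> A" using Max_in[OF \<open>finite A\<close> False] .
    have "A = {1..Max A}"
    proof (intro set_eqI iffI)
      fix x assume "x \<in> A"
      then show "x \<in> {1..Max A}" using Max_ge[OF \<open>finite A\<close>] unfolding A_def by simp
    next
      fix x assume "x \<in> {1..Max A}"
      then show "x \<in> A" using down_closed[OF \<open>Max A \<in> A\<close>] by simp
    qed
    then show ?thesis by (metis card_atLeastAtMost diff_Suc_1)
  qed simp
  then have "i \<in> A \<longleftrightarrow> i \<le> card A" using assms(3) by (metis atLeastAtMost_iff)
  moreover have "t \<le> part_at lam i \<longleftrightarrow> i \<in> A"
    using assms unfolding A_def part_at_def by auto
  ultimately show ?thesis unfolding conj_part_def A_def[symmetric] by simp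
qed

lemma mem_skew: "(x, y) \<in> skew lam mu \<longleftrightarrow> 1 \<le> x \<and> 1 \<le> y \<and> part_at mu x < y \<and> y \<le> part_at lam x"
  unfolding skew_def by auto

lemma skew_col_le_part_at_1:
  assumes "partition lam" "(x, y) \<in> skew lam mu"
  shows "y \<le> part_at lam 1"
  using assms part_at_antimono[OF assms(1), of 1 x] by (auto simp: mem_skew)

lemma finite_skew:
  assumes "partition lam"
  shows "finite (skew lam mu)"
proof (rule finite_subset)
  show "skew lam mu \<subseteq> {1..length lam} \<times> {1..part_at lam 1}"
  proof (rule subrelI)
    fix x y assume xy: "(x, y) \<in> skew lam mu"
    then have "x \<le> length lam" by (auto simp: mem_skew part_at_def split: if_splits)
    with xy show "(x, y) \<in> {1..length lam} \<times> {1..part_at lam 1}"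
      using skew_col_le_part_at_1[OF assms xy] by (simp add: mem_skew)
  qed
qed simp

lemma skew_rectangle_closed:
  assumes "partition lam" "partition mu" "(i, j) \<in> skew lam mu" "(i', j') \<in> skew lam mu"
    and "i \<le> i''" "i'' \<le> i'" "j \<le> j''" "j'' \<le> j'"
  shows "(i'', j'') \<in> skew lam mu"
  using assms part_at_antimono[OF assms(1), of i'' i'] part_at_antimono[OF assms(2), of i i'']
  by (force simp: mem_skew)

lemma content_Pair: "content lam r (x, y) = int y - int x + r - 1 + int (conj_part lam 1)"
  unfolding content_def by simp

lemma content_eq_same_col_eq:
  "content lam r z = content lam r w \<Longrightarrow> snd z = snd w \<Longrightarrow> z = w"
  unfolding content_def by (simp add: prod_eq_iff)

section \<open>Extreme cells of a content\<close>

lemma leftmost_of_spec: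
  assumes "z \<in> skew lam mu" "content lam r z = c"
  shows "leftmost_of lam mu r c \<in> skew lam mu" "content lam r (leftmost_of lam mu r c) = c"
    and "\<And>y. y \<in> skew lam mu \<Longrightarrow> content lam r y = c \<Longrightarrow> snd (leftmost_of lam mu r c) \<le> snd y"
proof -
  let ?P = "\<lambda>x. x \<in> skew lam mu \<and> content lam r x = c"
  obtain x where x: "?P x" "\<And>y. ?P y \<Longrightarrow> snd x \<le> snd y"
    using ex_has_least_nat[of ?P z snd] assms by blast
  have "leftmost_of lam mu r c = x"
    unfolding leftmost_of_def
  proof (rule the_equality)
    fix y assume y: "y \<in> skew lam mu \<and> content lam r y = c \<and> (\<forall>y'\<in>skew lam mu. content lam r y' = c \<longrightarrow> snd y \<le> snd y')"
    then have "snd y = snd x" using x by (intro antisym) auto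
    then show "y = x" using y x(1) content_eq_same_col_eq by metis
  qed (use x in auto)
  then show "leftmost_of lam mu r c \<in> skew lam mu" "content lam r (leftmost_of lam mu r c) = c"
    and "\<And>y. y \<in> skew lam mu \<Longrightarrow> content lam r y = c \<Longrightarrow> snd (leftmost_of lam mu r c) \<le> snd y"
    using x by auto
qed

lemma rightmost_of_spec:
  assumes "partition lam" "z \<in> skew lam mu" "content lam r z = c"
  shows "rightmost_of lam mu r c \<in> skew lam mu" "content lam r (rightmost_of lam mu r c) = c"
    and "\<And>y. y \<in> skew lam mu \<Longrightarrow> content lam r y = c \<Longrightarrow> snd y \<le> snd (rightmost_of lam mu r c)"
proof -
  let ?P = "\<lambda>x. x \<in> skew lam mu \<and> content lam r x = c"
  obtain x where x: "?P x" "\<And>y. ?P y \<Longrightarrow> snd y \<le> snd x"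
    using ex_has_greatest_nat[of ?P z snd "Suc (part_at lam 1)"] assms
      skew_col_le_part_at_1[OF assms(1)] by fastforce
  have "rightmost_of lam mu r c = x"
    unfolding rightmost_of_def
  proof (rule the_equality)
    fix y assume y: "y \<in> skew lam mu \<and> content lam r y = c \<and> (\<forall>y'\<in>skew lam mu. content lam r y' = c \<longrightarrow> snd y' \<le> snd y)"
    then have "snd y = snd x" using x by (intro antisym) auto
    then show "y = x" using y x(1) content_eq_same_col_eq by metis
  qed (use x in auto)
  then show "rightmost_of lam mu r c \<in> skew lam mu" "content lam r (rightmost_of lam mu r c) = c"
    and "\<And>y. y \<in> skew lam mu \<Longrightarrow> content lam r y = c \<Longrightarrow> snd y \<le> snd (rightmost_of lam mu r c)"
    using x by auto
qed

text \<open>If a cell of content \<open>c' \<ge> c\<close> lay strictly left of the leftmost cell of content \<open>c\<close>,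
  the cell of content \<open>c\<close> in its column would lie in the rectangle spanned by the two.\<close>

lemma leftmost_of_col_le:
  assumes pl: "partition lam" "partition mu"
    and z: "z \<in> skew lam mu" "content lam r z = c"
    and m': "(i', j') \<in> skew lam mu" "content lam r (i', j') = c'" and "c \<le> c'"
  shows "snd (leftmost_of lam mu r c) \<le> j'"
proof (rule ccontr)
  obtain i j where m: "leftmost_of lam mu r c = (i, j)" by fastforce
  note m_props = leftmost_of_spec[OF z, unfolded m]
  assume "\<not> snd (leftmost_of lam mu r c) \<le> j'"
  then have "j' < j" using m by simp
  moreover have "int j - int i \<le> int j' - int i'"
    using \<open>c \<le> c'\<close> m_props(2) m'(2) by (simp add: content_Pair)
  ultimately have "i' \<le> i + j' - j" "i + j' - j \<le> i" "j \<le> i + j'" by linarith+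
  then have "(i + j' - j, j') \<in> skew lam mu"
    using skew_rectangle_closed[OF pl m'(1) m_props(1)] \<open>j' < j\<close> by simp
  moreover have "content lam r (i + j' - j, j') = c"
    using m_props(2) \<open>j \<le> i + j'\<close> by (simp add: content_Pair of_nat_diff)
  ultimately have "j \<le> j'" using m_props(3) by fastforce
  then show False using \<open>j' < j\<close> by simp
qed

lemma rightmost_of_col_ge:
  assumes pl: "partition lam" "partition mu"
    and z': "z' \<in> skew lam mu" "content lam r z' = c'"
    and m: "(i, j) \<in> skew lam mu" "content lam r (i, j) = c" and "c \<le> c'"
  shows "j \<le> snd (rightmost_of lam mu r c')"
proof (rule ccontr)
  obtain i' j' where m': "rightmost_of lam mu r c' = (i', j')" by fastforce
  note m'_props = rightmost_of_spec[OF pl(1) z', unfolded m']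
  assume "\<not> j \<le> snd (rightmost_of lam mu r c')"
  then have "j' < j" using m' by simp
  moreover have "int j - int i \<le> int j' - int i'"
    using \<open>c \<le> c'\<close> m(2) m'_props(2) by (simp add: content_Pair)
  ultimately have "i' \<le> i' + j - j'" "i' + j - j' \<le> i" by linarith+
  then have "(i' + j - j', j) \<in> skew lam mu"
    using skew_rectangle_closed[OF pl m'_props(1) m(1)] \<open>j' < j\<close> by simp
  moreover have "content lam r (i' + j - j', j) = c'"
    using m'_props(2) \<open>j' < j\<close> by (simp add: content_Pair of_nat_diff)
  ultimately have "j \<le> j'" using m'_props(3) by fastforce
  then show False using \<open>j' < j\<close> by simp
qed

lemma connected_rshape_conj_part_lt:
  assumes cr: "connected_rshape lam mu" and u: "u \<in> skew lam mu" and v: "v \<in> skew lam mu"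
    and "snd u \<le> t" "t < snd v"
  shows "conj_part mu t < conj_part lam (t + 1)"
proof (rule ccontr)
  assume no_overlap: "\<not> ?thesis"
  let ?E = "{(u, v). u \<in> skew lam mu \<and> v \<in> skew lam mu \<and> adjacent u v}"
  have pl: "partition lam" "partition mu" using cr connected_rshape_def by auto
  have "1 \<le> t" using u \<open>snd u \<le> t\<close> by (cases u) (auto simp: mem_skew)
  have "snd w \<le> t" if "(u, w) \<in> ?E\<^sup>*" for w
    using that
  proof (induction rule: rtrancl_induct)
    case (step y z)
    obtain y1 y2 z1 z2 where yz: "y = (y1, y2)" "z = (z1, z2)" by fastforce
    show ?case
    proof (rule ccontr)
      assume "\<not> snd z \<le> t"
      then have "z2 = t + 1" "y2 = t" "z1 = y1"
        using step yz unfolding adjacent_def by auto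
      then have "1 \<le> y1" "part_at mu y1 < t" "t + 1 \<le> part_at lam y1"
        using step yz by (auto simp: mem_skew)
      then show False
        using no_overlap le_conj_part_iff[OF pl(1), of "t + 1" y1]
          le_conj_part_iff[OF pl(2) \<open>1 \<le> t\<close>, of y1] by simp
    qed
  qed (use \<open>snd u \<le> t\<close> in simp)
  moreover have "(u, v) \<in> ?E\<^sup>*"
    using cr u v unfolding connected_rshape_def edge_connected_def by blast
  ultimately show False using \<open>t < snd v\<close> by fastforce
qed

lemma column_flags_between_cells:
  assumes cr: "connected_rshape lam mu" and cf: "column_flags lam mu N a b"
    and u: "u \<in> skew lam mu" and v: "v \<in> skew lam mu" and t: "t \<in> {snd u..<snd v}"
  shows "a t - a (t + 1) \<le> int (conj_part mu t) - int (conj_part mu (t + 1)) + 1"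
    and "b t - b (t + 1) \<le> int (conj_part lam t) - int (conj_part lam (t + 1)) + 1"
proof -
  have "partition lam" using cr connected_rshape_def by auto
  have "1 \<le> t" using t u by (cases u) (simp add: mem_skew)
  moreover have "t < N"
    using t cf skew_col_le_part_at_1[OF \<open>partition lam\<close>, of "fst v" "snd v"] v
    unfolding column_flags_def by fastforce
  moreover have "conj_part mu t < conj_part lam (t + 1)"
    using connected_rshape_conj_part_lt[OF cr u v] t by simp
  ultimately show "a t - a (t + 1) \<le> int (conj_part mu t) - int (conj_part mu (t + 1)) + 1"
    and "b t - b (t + 1) \<le> int (conj_part lam t) - int (conj_part lam (t + 1)) + 1"
    using cf unfolding column_flags_def by blast+
qed

text \<open>Evaluated at the cells \<open>m\<^sub>r\<close> and \<open>M\<^sub>r\<close>, these are the entries \<open>a\<^sup>i\<^sup>j\<^sub>r\<close> and \<open>b\<^sup>i\<^sup>j\<^sub>r\<close>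
  of the induced ribbon flags.\<close>

definition a_flag_at :: "nat list \<Rightarrow> (nat \<Rightarrow> int) \<Rightarrow> nat \<times> nat \<Rightarrow> int" where
  "a_flag_at mu a m = a (snd m) - (int (conj_part mu (snd m)) + 1) + int (fst m)"

definition b_flag_at :: "nat list \<Rightarrow> (nat \<Rightarrow> int) \<Rightarrow> nat \<times> nat \<Rightarrow> int" where
  "b_flag_at lam b M = b (snd M) - int (conj_part lam (snd M)) + int (fst M)"

text \<open>Between the columns of the two extreme cells \<open>a\<^sub>t - \<mu>'\<^sub>t + t\<close> (resp. \<open>b\<^sub>t - \<lambda>'\<^sub>t + t\<close>)
  increases weakly; the row terms turn this into a content difference.\<close>

lemma a_flag_at_leftmost_of_diff_le:
  assumes cr: "connected_rshape lam mu" and cf: "column_flags lam mu N a b"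
    and z: "z \<in> skew lam mu" "content lam r z = c"
    and z': "z' \<in> skew lam mu" "content lam r z' = c'" and "c \<le> c'"
  shows "a_flag_at mu a (leftmost_of lam mu r c) - a_flag_at mu a (leftmost_of lam mu r c') \<le> c' - c"
proof -
  have pl: "partition lam" "partition mu" using cr connected_rshape_def by auto
  obtain i j where m: "leftmost_of lam mu r c = (i, j)" by fastforce
  obtain i' j' where m': "leftmost_of lam mu r c' = (i', j')" by fastforce
  note m_props = leftmost_of_spec[OF z, unfolded m]
  note m'_props = leftmost_of_spec[OF z', unfolded m']
  have "j \<le> j'" using leftmost_of_col_le[OF pl z m'_props(1,2) \<open>c \<le> c'\<close>] m by simp
  define A where "A t = a t - int (conj_part mu t) + int t" for t
  have "A j \<le> A j'"
  proof (rule lift_Suc_mono_le_ivl[OF _ \<open>j \<le> j'\<close> order_refl])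
    fix t assume "t \<in> {j..<j'}"
    then have "a t - a (t + 1) \<le> int (conj_part mu t) - int (conj_part mu (t + 1)) + 1"
      using column_flags_between_cells(1)[OF cr cf m_props(1) m'_props(1)] by simp
    then show "A t \<le> A (Suc t)" unfolding A_def by simp
  qed
  then show ?thesis
    using m_props(2) m'_props(2) unfolding a_flag_at_def A_def m m' by (simp add: content_Pair)
qed

lemma b_flag_at_rightmost_of_diff_le:
  assumes cr: "connected_rshape lam mu" and cf: "column_flags lam mu N a b"
    and z: "z \<in> skew lam mu" "content lam r z = c"
    and z': "z' \<in> skew lam mu" "content lam r z' = c'" and "c \<le> c'"
  shows "b_flag_at lam b (rightmost_of lam mu r c) - b_flag_at lam b (rightmost_of lam mu r c') \<le> c' - c"
proof -
  have pl: "partition lam" "partition mu" using cr connected_rshape_def by auto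
  obtain i j where m: "rightmost_of lam mu r c = (i, j)" by fastforce
  obtain i' j' where m': "rightmost_of lam mu r c' = (i', j')" by fastforce
  note m_props = rightmost_of_spec[OF pl(1) z, unfolded m]
  note m'_props = rightmost_of_spec[OF pl(1) z', unfolded m']
  have "j \<le> j'" using rightmost_of_col_ge[OF pl z' m_props(1,2) \<open>c \<le> c'\<close>] m' by simp
  define B where "B t = b t - int (conj_part lam t) + int t" for t
  have "B j \<le> B j'"
  proof (rule lift_Suc_mono_le_ivl[OF _ \<open>j \<le> j'\<close> order_refl])
    fix t assume "t \<in> {j..<j'}"
    then have "b t - b (t + 1) \<le> int (conj_part lam t) - int (conj_part lam (t + 1)) + 1"
      using column_flags_between_cells(2)[OF cr cf m_props(1) m'_props(1)] by simp
    then show "B t \<le> B (Suc t)" unfolding B_def by simp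
  qed
  then show ?thesis
    using m_props(2) m'_props(2) unfolding b_flag_at_def B_def m m' by (simp add: content_Pair)
qed

section \<open>Staircases\<close>

text \<open>The shape of a normalized segment \<open>\<Theta>(p,q)\<close> of the cutting strip.\<close>

definition staircase :: "(nat \<times> nat) set \<Rightarrow> bool" where
  "staircase S \<longleftrightarrow> finite S \<and> (\<forall>(x, y)\<in>S. 1 \<le> x \<and> 1 \<le> y) \<and>
     (\<forall>i. 1 \<le> i \<and> i \<le> shape_rows S \<longrightarrow> (\<exists>j. (i, j) \<in> S)) \<and>
     (\<forall>t. 1 \<le> t \<and> t \<le> shape_cols S \<longrightarrow> (\<exists>x. (x, t) \<in> S)) \<and>
     (\<forall>(x, y)\<in>S. \<forall>(x', y')\<in>S. x < x' \<longrightarrow> y' \<le> y)"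

lemma staircaseI:
  assumes "finite S" "\<And>x y. (x, y) \<in> S \<Longrightarrow> 1 \<le> x \<and> 1 \<le> y"
    and "\<And>i. 1 \<le> i \<Longrightarrow> i \<le> shape_rows S \<Longrightarrow> \<exists>j. (i, j) \<in> S"
    and "\<And>t. 1 \<le> t \<Longrightarrow> t \<le> shape_cols S \<Longrightarrow> \<exists>x. (x, t) \<in> S"
    and "\<And>x y x' y'. (x, y) \<in> S \<Longrightarrow> (x', y') \<in> S \<Longrightarrow> x < x' \<Longrightarrow> y' \<le> y"
  shows "staircase S"
  using assms unfolding staircase_def by blast

lemma staircase_finite: "staircase S \<Longrightarrow> finite S"
  unfolding staircase_def by simp

lemma staircase_pos: "staircase S \<Longrightarrow> (x, y) \<in> S \<Longrightarrow> 1 \<le> x \<and> 1 \<le> y"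
  unfolding staircase_def by fast

lemma staircase_row_nonempty: "staircase S \<Longrightarrow> 1 \<le> i \<Longrightarrow> i \<le> shape_rows S \<Longrightarrow> \<exists>j. (i, j) \<in> S"
  unfolding staircase_def by simp

lemma staircase_col_nonempty: "staircase S \<Longrightarrow> 1 \<le> t \<Longrightarrow> t \<le> shape_cols S \<Longrightarrow> \<exists>x. (x, t) \<in> S"
  unfolding staircase_def by simp

lemma staircase_row_less_imp_col_le:
  "staircase S \<Longrightarrow> (x, y) \<in> S \<Longrightarrow> (x', y') \<in> S \<Longrightarrow> x < x' \<Longrightarrow> y' \<le> y"
  unfolding staircase_def by fast

lemma staircase_col_less_imp_row_le:
  "staircase S \<Longrightarrow> (x, y) \<in> S \<Longrightarrow> (x', y') \<in> S \<Longrightarrow> y < y' \<Longrightarrow> x' \<le> x"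
  using staircase_row_less_imp_col_le[of S x y x' y'] by fastforce

lemma finite_col: "finite S \<Longrightarrow> finite {x. (x, t) \<in> S}"
  by (rule finite_subset[of _ "fst ` S"]) force+

lemma finite_row: "finite S \<Longrightarrow> finite {y. (i, y) \<in> S}"
  by (rule finite_subset[of _ "snd ` S"]) force+

lemma shape_rows_cols_ge:
  assumes "finite S" "(x, y) \<in> S"
  shows "x \<le> shape_rows S" "y \<le> shape_cols S"
  using assms unfolding shape_rows_def shape_cols_def by (force intro: Max_ge)+

lemma length_shape_kappa [simp]: "length (shape_kappa S) = shape_rows S"
  unfolding shape_kappa_def by simp

lemma length_shape_nu [simp]: "length (shape_nu S) = shape_rows S"
  unfolding shape_nu_def by simp

lemma upt_nth_pred: "1 \<le> i \<Longrightarrow> i \<le> n \<Longrightarrow> [Suc 0..<Suc n] ! (i - Suc 0) = i"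
  by (subst nth_upt) auto

lemma part_at_shape_kappa:
  "1 \<le> i \<Longrightarrow> i \<le> shape_rows S \<Longrightarrow> part_at (shape_kappa S) i = Max {j. (i, j) \<in> S}"
  using upt_nth_pred[of i "shape_rows S"] unfolding part_at_def shape_kappa_def by (simp del: upt_Suc)

lemma part_at_shape_nu:
  "1 \<le> i \<Longrightarrow> i \<le> shape_rows S \<Longrightarrow> part_at (shape_nu S) i = Min {j. (i, j) \<in> S} - 1"
  using upt_nth_pred[of i "shape_rows S"] unfolding part_at_def shape_nu_def by (simp del: upt_Suc)

lemma staircase_col_Min:
  assumes "staircase S" "1 \<le> t" "t \<le> shape_cols S"
  shows "(Min {x. (x, t) \<in> S}, t) \<in> S" "\<And>x. (x, t) \<in> S \<Longrightarrow> Min {x. (x, t) \<in> S} \<le> x"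
  using staircase_col_nonempty[OF assms] finite_col[OF staircase_finite[OF assms(1)], of t]
  by (auto intro: Min_in[of "{x. (x, t) \<in> S}", THEN CollectD])

lemma staircase_col_Max:
  assumes "staircase S" "1 \<le> t" "t \<le> shape_cols S"
  shows "(Max {x. (x, t) \<in> S}, t) \<in> S" "\<And>x. (x, t) \<in> S \<Longrightarrow> x \<le> Max {x. (x, t) \<in> S}"
  using staircase_col_nonempty[OF assms] finite_col[OF staircase_finite[OF assms(1)], of t]
  by (auto intro: Max_in[of "{x. (x, t) \<in> S}", THEN CollectD])

lemma staircase_row_Min:
  assumes "staircase S" "1 \<le> i" "i \<le> shape_rows S"
  shows "(i, Min {y. (i, y) \<in> S}) \<in> S" "\<And>y. (i, y) \<in> S \<Longrightarrow> Min {y. (i, y) \<in> S} \<le> y"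
  using staircase_row_nonempty[OF assms] finite_row[OF staircase_finite[OF assms(1)], of i]
  by (auto intro: Min_in[of "{y. (i, y) \<in> S}", THEN CollectD])

lemma staircase_row_Max:
  assumes "staircase S" "1 \<le> i" "i \<le> shape_rows S"
  shows "(i, Max {y. (i, y) \<in> S}) \<in> S" "\<And>y. (i, y) \<in> S \<Longrightarrow> y \<le> Max {y. (i, y) \<in> S}"
  using staircase_row_nonempty[OF assms] finite_row[OF staircase_finite[OF assms(1)], of i]
  by (auto intro: Max_in[of "{y. (i, y) \<in> S}", THEN CollectD])

lemma conj_part_shape_nu:
  assumes st: "staircase S" and t: "1 \<le> t" "t \<le> shape_cols S"
  shows "conj_part (shape_nu S) t = Min {x. (x, t) \<in> S} - 1"
proof (rule conj_part_eqI)
  note g = staircase_col_Min[OF st t]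
  let ?g = "Min {x. (x, t) \<in> S}"
  show "?g - 1 \<le> length (shape_nu S)"
    using shape_rows_cols_ge[OF staircase_finite[OF st] g(1)] by simp
  fix i assume i: "1 \<le> i" "i \<le> length (shape_nu S)"
  note h = staircase_row_Min[OF st i(1) i(2)[unfolded length_shape_nu]]
  let ?h = "Min {y. (i, y) \<in> S}"
  have "t < ?h \<longleftrightarrow> i < ?g"
  proof
    assume "t < ?h"
    show "i < ?g"
    proof (rule ccontr)
      assume "\<not> i < ?g"
      then have "?h \<le> t"
        using h(2) g(1) staircase_row_less_imp_col_le[OF st g(1) h(1)] by (cases "i = ?g") auto
      then show False using \<open>t < ?h\<close> by simp
    qed
  next
    assume "i < ?g"
    have "(i, t) \<notin> S" using g(2) \<open>i < ?g\<close> by fastforce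
    then show "t < ?h"
      using staircase_row_less_imp_col_le[OF st h(1) g(1) \<open>i < ?g\<close>] h(1)
      by (metis le_neq_implies_less)
  qed
  then show "t \<le> part_at (shape_nu S) i \<longleftrightarrow> i \<le> ?g - 1"
    using i staircase_pos[OF st h(1)] staircase_pos[OF st g(1)]
    by (auto simp: part_at_shape_nu)
qed

lemma conj_part_shape_kappa:
  assumes st: "staircase S" and t: "1 \<le> t" "t \<le> shape_cols S"
  shows "conj_part (shape_kappa S) t = Max {x. (x, t) \<in> S}"
proof (rule conj_part_eqI)
  note d = staircase_col_Max[OF st t]
  let ?d = "Max {x. (x, t) \<in> S}"
  show "?d \<le> length (shape_kappa S)"
    using shape_rows_cols_ge[OF staircase_finite[OF st] d(1)] by simp
  fix i assume i: "1 \<le> i" "i \<le> length (shape_kappa S)"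
  note e = staircase_row_Max[OF st i(1) i(2)[unfolded length_shape_kappa]]
  let ?e = "Max {y. (i, y) \<in> S}"
  have "t \<le> ?e \<longleftrightarrow> i \<le> ?d"
  proof
    assume "t \<le> ?e"
    show "i \<le> ?d"
    proof (rule ccontr)
      assume "\<not> i \<le> ?d"
      then have "(i, t) \<in> S"
        using staircase_row_less_imp_col_le[OF st d(1) e(1)] \<open>t \<le> ?e\<close> e(1) by (simp add: antisym)
      then show False using d(2) \<open>\<not> i \<le> ?d\<close> by fastforce
    qed
  next
    assume "i \<le> ?d"
    then show "t \<le> ?e"
      using e(2) d(1) staircase_row_less_imp_col_le[OF st e(1) d(1)] by (cases "i = ?d") auto
  qed
  then show "t \<le> part_at (shape_kappa S) i \<longleftrightarrow> i \<le> ?d"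
    using i by (simp add: part_at_shape_kappa)
qed

lemma conj_part_shape_kappa_1:
  assumes st: "staircase S"
  shows "conj_part (shape_kappa S) 1 = shape_rows S"
proof (rule conj_part_eqI)
  fix i assume i: "1 \<le> i" "i \<le> length (shape_kappa S)"
  have "(i, Max {y. (i, y) \<in> S}) \<in> S" using staircase_row_Max[OF st] i by simp
  then show "1 \<le> part_at (shape_kappa S) i \<longleftrightarrow> i \<le> shape_rows S"
    using i staircase_pos[OF st] by (auto simp: part_at_shape_kappa)
qed simp

lemma part_at_shape_kappa_1_le:
  assumes st: "staircase S"
  shows "part_at (shape_kappa S) 1 \<le> shape_cols S"
proof (cases "1 \<le> shape_rows S")
  case True
  then have "(1, Max {y. (1, y) \<in> S}) \<in> S" using staircase_row_Max[OF st] by simp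
  then show ?thesis
    using shape_rows_cols_ge[OF staircase_finite[OF st]] True by (simp add: part_at_shape_kappa)
qed (simp add: part_at_def shape_kappa_def)

lemma content_shape_kappa:
  assumes "staircase S"
  shows "content (shape_kappa S) p (x, y) = int y - int x + int (shape_rows S) - 1 + p"
  unfolding content_def conj_part_shape_kappa_1[OF assms] by simp

lemma staircase_induced_a_step:
  assumes cr: "connected_rshape lam mu" and cf: "column_flags lam mu N a b"
    and st: "staircase S"
    and occurs: "\<And>z. z \<in> S \<Longrightarrow> \<exists>w\<in>skew lam mu. content lam r w = content (shape_kappa S) p z"
    and "1 \<le> t" "t < shape_cols S"
  shows "a_flag_at mu a (leftmost_of lam mu r (content (shape_kappa S) p (Min {x. (x, t) \<in> S}, t)))
       - a_flag_at mu a (leftmost_of lam mu r (content (shape_kappa S) p (Min {x. (x, t + 1) \<in> S}, t + 1)))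
       \<le> int (conj_part (shape_nu S) t) - int (conj_part (shape_nu S) (t + 1)) + 1"
proof -
  have t: "1 \<le> t" "t \<le> shape_cols S" and t': "1 \<le> t + 1" "t + 1 \<le> shape_cols S"
    using assms(5,6) by auto
  let ?c = "content (shape_kappa S) p"
  define g0 where "g0 = Min {x. (x, t) \<in> S}"
  define g1 where "g1 = Min {x. (x, t + 1) \<in> S}"
  have cells: "(g0, t) \<in> S" "(g1, t + 1) \<in> S"
    using staircase_col_Min(1)[OF st t] staircase_col_Min(1)[OF st t'] unfolding g0_def g1_def .
  have "g1 \<le> g0" using staircase_col_less_imp_row_le[OF st cells] by simp
  then have "?c (g0, t) \<le> ?c (g1, t + 1)" by (simp add: content_shape_kappa[OF st])
  moreover obtain w0 w1 where "w0 \<in> skew lam mu" "content lam r w0 = ?c (g0, t)"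
    and "w1 \<in> skew lam mu" "content lam r w1 = ?c (g1, t + 1)"
    using occurs[OF cells(1)] occurs[OF cells(2)] by metis
  ultimately have "a_flag_at mu a (leftmost_of lam mu r (?c (g0, t)))
      - a_flag_at mu a (leftmost_of lam mu r (?c (g1, t + 1))) \<le> ?c (g1, t + 1) - ?c (g0, t)"
    using a_flag_at_leftmost_of_diff_le[OF cr cf] by blast
  moreover have "conj_part (shape_nu S) t = g0 - 1" "conj_part (shape_nu S) (t + 1) = g1 - 1"
    using conj_part_shape_nu[OF st t] conj_part_shape_nu[OF st t'] unfolding g0_def g1_def by simp_all
  moreover have "1 \<le> g0" "1 \<le> g1" using staircase_pos[OF st cells(1)] staircase_pos[OF st cells(2)] by simp_all
  ultimately show ?thesis
    unfolding g0_def[symmetric] g1_def[symmetric] by (simp add: content_shape_kappa[OF st])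
qed

lemma staircase_induced_b_step:
  assumes cr: "connected_rshape lam mu" and cf: "column_flags lam mu N a b"
    and st: "staircase S"
    and occurs: "\<And>z. z \<in> S \<Longrightarrow> \<exists>w\<in>skew lam mu. content lam r w = content (shape_kappa S) p z"
    and "1 \<le> t" "t < shape_cols S"
  shows "b_flag_at lam b (rightmost_of lam mu r (content (shape_kappa S) p (Max {x. (x, t) \<in> S}, t)))
       - b_flag_at lam b (rightmost_of lam mu r (content (shape_kappa S) p (Max {x. (x, t + 1) \<in> S}, t + 1)))
       \<le> int (conj_part (shape_kappa S) t) - int (conj_part (shape_kappa S) (t + 1)) + 1"
proof -
  have t: "1 \<le> t" "t \<le> shape_cols S" and t': "1 \<le> t + 1" "t + 1 \<le> shape_cols S"
    using assms(5,6) by auto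
  let ?c = "content (shape_kappa S) p"
  define d0 where "d0 = Max {x. (x, t) \<in> S}"
  define d1 where "d1 = Max {x. (x, t + 1) \<in> S}"
  have cells: "(d0, t) \<in> S" "(d1, t + 1) \<in> S"
    using staircase_col_Max(1)[OF st t] staircase_col_Max(1)[OF st t'] unfolding d0_def d1_def .
  have "d1 \<le> d0" using staircase_col_less_imp_row_le[OF st cells] by simp
  then have "?c (d0, t) \<le> ?c (d1, t + 1)" by (simp add: content_shape_kappa[OF st])
  moreover obtain v0 v1 where "v0 \<in> skew lam mu" "content lam r v0 = ?c (d0, t)"
    and "v1 \<in> skew lam mu" "content lam r v1 = ?c (d1, t + 1)"
    using occurs[OF cells(1)] occurs[OF cells(2)] by metis
  ultimately have "b_flag_at lam b (rightmost_of lam mu r (?c (d0, t)))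
      - b_flag_at lam b (rightmost_of lam mu r (?c (d1, t + 1))) \<le> ?c (d1, t + 1) - ?c (d0, t)"
    using b_flag_at_rightmost_of_diff_le[OF cr cf] by blast
  moreover have "conj_part (shape_kappa S) t = d0" "conj_part (shape_kappa S) (t + 1) = d1"
    using conj_part_shape_kappa[OF st t] conj_part_shape_kappa[OF st t'] unfolding d0_def d1_def by simp_all
  ultimately show ?thesis
    unfolding d0_def[symmetric] d1_def[symmetric] by (simp add: content_shape_kappa[OF st])
qed

lemma staircase_induced_column_flags:
  assumes "connected_rshape lam mu" "column_flags lam mu N a b" "staircase S"
    and "\<And>z. z \<in> S \<Longrightarrow> \<exists>w\<in>skew lam mu. content lam r w = content (shape_kappa S) p z"
  shows "column_flags (shape_kappa S) (shape_nu S) (shape_cols S)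
    (\<lambda>\<rho>. a_flag_at mu a (leftmost_of lam mu r (content (shape_kappa S) p (Min {x. (x, \<rho>) \<in> S}, \<rho>))))
    (\<lambda>\<rho>. b_flag_at lam b (rightmost_of lam mu r (content (shape_kappa S) p (Max {x. (x, \<rho>) \<in> S}, \<rho>))))"
  unfolding column_flags_def
  using part_at_shape_kappa_1_le[OF assms(3)] staircase_induced_a_step[OF assms]
    staircase_induced_b_step[OF assms] by simp

section \<open>North-east lattice paths\<close>

definition north_east_path :: "(nat \<Rightarrow> int \<times> int) \<Rightarrow> bool" where
  "north_east_path P \<longleftrightarrow>
     (\<forall>n. P (Suc n) = (fst (P n) - 1, snd (P n)) \<or> P (Suc n) = (fst (P n), snd (P n) + 1))"

lemma north_east_path_strip_pos: "north_east_path (strip_pos up c0)"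
  unfolding north_east_path_def by simp

lemma north_east_path_SucE:
  assumes "north_east_path P"
  obtains "P (Suc n) = (fst (P n) - 1, snd (P n))" | "P (Suc n) = (fst (P n), snd (P n) + 1)"
  using assms unfolding north_east_path_def by blast

lemma north_east_path_mono:
  assumes "north_east_path P" "n \<le> n'"
  shows "fst (P n') \<le> fst (P n) \<and> snd (P n) \<le> snd (P n')"
  using assms(2)
proof (induction rule: dec_induct)
  case (step k)
  then show ?case by (cases rule: north_east_path_SucE[OF assms(1), of k]) auto
qed simp

lemma north_east_path_step_bounded:
  assumes "north_east_path P"
  shows "\<bar>fst (P (Suc n)) - fst (P n)\<bar> \<le> 1" "\<bar>snd (P (Suc n)) - snd (P n)\<bar> \<le> 1"
  by (cases rule: north_east_path_SucE[OF assms, of n]; simp)+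

lemma normalize_north_east_segment:
  assumes P: "north_east_path P" and "n0 \<le> n1"
  defines "S \<equiv> normalize (P ` {n0..n1})"
  shows "S = (\<lambda>n. (nat (fst (P n) - fst (P n1) + 1), nat (snd (P n) - snd (P n0) + 1))) ` {n0..n1}"
    and "shape_rows S = nat (fst (P n0) - fst (P n1) + 1)"
    and "shape_cols S = nat (snd (P n1) - snd (P n0) + 1)"
proof -
  have mono: "\<And>n n'. n \<le> n' \<Longrightarrow> fst (P n') \<le> fst (P n) \<and> snd (P n) \<le> snd (P n')"
    using north_east_path_mono[OF P] .
  have "Min (fst ` P ` {n0..n1}) = fst (P n1)"
    by (rule Min_eqI) (use \<open>n0 \<le> n1\<close> mono in auto)
  moreover have "Min (snd ` P ` {n0..n1}) = snd (P n0)"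
    by (rule Min_eqI) (use \<open>n0 \<le> n1\<close> mono in auto)
  ultimately show S: "S = (\<lambda>n. (nat (fst (P n) - fst (P n1) + 1), nat (snd (P n) - snd (P n0) + 1))) ` {n0..n1}"
    unfolding S_def normalize_def image_image by (simp add: case_prod_beta)
  show "shape_rows S = nat (fst (P n0) - fst (P n1) + 1)"
    unfolding shape_rows_def S image_image
    by (rule Max_eqI) (use \<open>n0 \<le> n1\<close> mono in \<open>auto intro: nat_mono\<close>)
  show "shape_cols S = nat (snd (P n1) - snd (P n0) + 1)"
    unfolding shape_cols_def S image_image
    by (rule Max_eqI) (use \<open>n0 \<le> n1\<close> mono in \<open>auto intro: nat_mono\<close>)
qed

lemma staircase_normalize_north_east_segment:
  assumes P: "north_east_path P" and "n0 \<le> n1"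
  shows "staircase (normalize (P ` {n0..n1}))"
proof -
  let ?S = "normalize (P ` {n0..n1})"
  define X where "X n = fst (P n) - fst (P n1) + 1" for n
  define Y where "Y n = snd (P n) - snd (P n0) + 1" for n
  note S = normalize_north_east_segment[OF P \<open>n0 \<le> n1\<close>, folded X_def Y_def]
  have mono: "X n' \<le> X n \<and> Y n \<le> Y n'" if "n \<le> n'" for n n'
    using north_east_path_mono[OF P that] unfolding X_def Y_def by simp
  have X_ge_1: "1 \<le> X n" and Y_ge_1: "1 \<le> Y n" if "n \<in> {n0..n1}" for n
    using that mono[of n n1] mono[of n0 n] by (simp_all add: X_def Y_def)
  show ?thesis
  proof (rule staircaseI)
    show "finite ?S" using S(1) by simp
  next
    fix x y assume "(x, y) \<in> ?S"
    then show "1 \<le> x \<and> 1 \<le> y" using S(1) X_ge_1 Y_ge_1 by force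
  next
    fix i assume i: "1 \<le> i" "i \<le> shape_rows ?S"
    have "\<forall>m. n0 \<le> m \<and> m < n1 \<longrightarrow> \<bar>- X (Suc m) - - X m\<bar> \<le> 1"
      using north_east_path_step_bounded(1)[OF P] by (simp add: X_def abs_minus_commute)
    moreover have "- X n0 \<le> - int i" "- int i \<le> - X n1"
      using i S(2) by (simp_all add: X_def)
    ultimately obtain n where "n0 \<le> n" "n \<le> n1" "- X n = - int i"
      using nat_intermed_int_val[of n0 n1 "\<lambda>m. - X m" "- int i"] \<open>n0 \<le> n1\<close> by blast
    then show "\<exists>j. (i, j) \<in> ?S" using S(1) by force
  next
    fix t assume t: "1 \<le> t" "t \<le> shape_cols ?S"
    have "\<forall>m. n0 \<le> m \<and> m < n1 \<longrightarrow> \<bar>Y (Suc m) - Y m\<bar> \<le> 1"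
      using north_east_path_step_bounded(2)[OF P] by (simp add: Y_def)
    moreover have "Y n0 \<le> int t" "int t \<le> Y n1"
      using t S(3) by (simp_all add: Y_def)
    ultimately obtain n where "n0 \<le> n" "n \<le> n1" "Y n = int t"
      using nat_intermed_int_val[of n0 n1 Y "int t"] \<open>n0 \<le> n1\<close> by blast
    then show "\<exists>x. (x, t) \<in> ?S" using S(1) by force
  next
    fix x y x' y' assume "(x, y) \<in> ?S" "(x', y') \<in> ?S" "x < x'"
    then obtain n n' where "x = nat (X n)" "y = nat (Y n)" "x' = nat (X n')" "y' = nat (Y n')"
      using S(1) by auto
    then show "y' \<le> y" using mono[of n' n] mono[of n n'] \<open>x < x'\<close> by (cases "n' \<le> n") auto
  qed
qed

lemma content_normalize_north_east_segment:
  assumes P: "north_east_path P" and "n0 \<le> n1" and z: "z \<in> normalize (P ` {n0..n1})"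
  shows "\<exists>n\<in>{n0..n1}. int (snd z) - int (fst z) + int (shape_rows (normalize (P ` {n0..n1}))) - 1
           = (snd (P n) - fst (P n)) - (snd (P n0) - fst (P n0))"
proof -
  note S = normalize_north_east_segment[OF P \<open>n0 \<le> n1\<close>]
  obtain n where n: "n \<in> {n0..n1}"
    "z = (nat (fst (P n) - fst (P n1) + 1), nat (snd (P n) - snd (P n0) + 1))"
    using z S(1) by auto
  then show ?thesis
    using north_east_path_mono[OF P, of n n1] north_east_path_mono[OF P, of n0 n]
      north_east_path_mono[OF P \<open>n0 \<le> n1\<close>] S(2) by (intro bexI[OF _ n(1)]) auto
qed

lemma snd_minus_fst_strip_pos: "snd (strip_pos up c0 n) - fst (strip_pos up c0 n) = int n"
  by (induction n) auto

section \<open>The cutting strip\<close>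

lemma head_mem:
  assumes "finite S" "S \<noteq> {}"
  shows "head S \<in> S"
proof -
  define R where "R = {y \<in> S. fst y = Max (fst ` S)}"
  have "Max (fst ` S) \<in> fst ` S" using assms by simp
  then have "finite R" "R \<noteq> {}" using assms(1) unfolding R_def by force+
  then have "Min (snd ` R) \<in> snd ` R" by simp
  then obtain x where "x \<in> R" "snd x = Min (snd ` R)" by force
  then have x: "x \<in> S \<and> (\<forall>y\<in>S. fst y \<le> fst x) \<and> (\<forall>y\<in>S. fst y = fst x \<longrightarrow> snd x \<le> snd y)"
    using assms \<open>finite R\<close> unfolding R_def by auto
  have "head S = x"
    unfolding head_def
  proof (rule the_equality)
    fix y assume "y \<in> S \<and> (\<forall>y'\<in>S. fst y' \<le> fst y) \<and> (\<forall>y'\<in>S. fst y' = fst y \<longrightarrow> snd y \<le> snd y')"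
    with x show "y = x" by (metis antisym prod_eqI)
  qed (rule x)
  then show ?thesis using x by simp
qed

lemma tail_mem:
  assumes "finite S" "S \<noteq> {}"
  shows "tail S \<in> S"
proof -
  define R where "R = {y \<in> S. fst y = Min (fst ` S)}"
  have "Min (fst ` S) \<in> fst ` S" using assms by simp
  then have "finite R" "R \<noteq> {}" using assms(1) unfolding R_def by force+
  then have "Max (snd ` R) \<in> snd ` R" by simp
  then obtain x where "x \<in> R" "snd x = Max (snd ` R)" by force
  then have x: "x \<in> S \<and> (\<forall>y\<in>S. fst x \<le> fst y) \<and> (\<forall>y\<in>S. fst y = fst x \<longrightarrow> snd y \<le> snd x)"
    using assms \<open>finite R\<close> unfolding R_def by auto
  have "tail S = x"
    unfolding tail_def
  proof (rule the_equality)
    fix y assume "y \<in> S \<and> (\<forall>y'\<in>S. fst y \<le> fst y') \<and> (\<forall>y'\<in>S. fst y' = fst y \<longrightarrow> snd y' \<le> snd y)"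
    with x show "y = x" by (metis antisym prod_eqI)
  qed (rule x)
  then show ?thesis using x by simp
qed

lemma outer_ribbon_decomp_head_tail_mem:
  assumes "outer_ribbon_decomp lam mu thetas" "partition lam" "i < length thetas"
  shows "head (thetas ! i) \<in> skew lam mu" "tail (thetas ! i) \<in> skew lam mu"
proof -
  have "is_ribbon (thetas ! i)" "thetas ! i \<subseteq> skew lam mu"
    using assms(1,3) unfolding outer_ribbon_decomp_def by auto
  moreover from this have "finite (thetas ! i)" "thetas ! i \<noteq> {}"
    using finite_subset finite_skew[OF assms(2)] unfolding is_ribbon_def edge_connected_def by auto
  ultimately show "head (thetas ! i) \<in> skew lam mu" "tail (thetas ! i) \<in> skew lam mu"
    using head_mem tail_mem by blast+
qed

lemma min_content_le:
  assumes "partition lam" "z \<in> skew lam mu"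
  shows "min_content lam mu r \<le> content lam r z"
  unfolding min_content_def using finite_skew[OF assms(1)] assms(2) by simp

lemma content_adjacent_le: "adjacent y z \<Longrightarrow> content lam r z \<le> content lam r y + 1"
  unfolding adjacent_def content_def by auto

lemma connected_skew_content_ivt:
  assumes ec: "edge_connected (skew lam mu)" and u: "u \<in> skew lam mu" and v: "v \<in> skew lam mu"
    and "content lam r u \<le> c" "c \<le> content lam r v"
  shows "\<exists>w\<in>skew lam mu. content lam r w = c"
proof (rule ccontr)
  assume none: "\<not> ?thesis"
  let ?E = "{(u, v). u \<in> skew lam mu \<and> v \<in> skew lam mu \<and> adjacent u v}"
  have "content lam r w < c" if "(u, w) \<in> ?E\<^sup>*" for w
    using that
  proof (induction rule: rtrancl_induct)
    case base then show ?case using u none \<open>content lam r u \<le> c\<close> by force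
  next
    case (step y z)
    then show ?case using none content_adjacent_le[of y z lam r] by force
  qed
  moreover have "(u, v) \<in> ?E\<^sup>*" using ec u v unfolding edge_connected_def by blast
  ultimately show False using \<open>c \<le> content lam r v\<close> by fastforce
qed

lemma Theta_seg_eq_strip_pos_image:
  assumes "min_content lam mu r \<le> p" "p \<le> q"
  shows "Theta_seg lam mu r thetas p q = strip_pos (content_goes_up lam mu r thetas) (min_content lam mu r)
           ` {nat (p - min_content lam mu r)..nat (q - min_content lam mu r)}"
proof -
  let ?c0 = "min_content lam mu r"
  have "(\<lambda>c. nat (c - ?c0)) ` {p..q} = {nat (p - ?c0)..nat (q - ?c0)}"
  proof
    show "{nat (p - ?c0)..nat (q - ?c0)} \<subseteq> (\<lambda>c. nat (c - ?c0)) ` {p..q}"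
    proof
      fix n assume "n \<in> {nat (p - ?c0)..nat (q - ?c0)}"
      then have "int n + ?c0 \<in> {p..q}" "n = nat (int n + ?c0 - ?c0)" using assms by auto
      then show "n \<in> (\<lambda>c. nat (c - ?c0)) ` {p..q}" by blast
    qed
  qed auto
  moreover have "Theta_seg lam mu r thetas p q
      = strip_pos (content_goes_up lam mu r thetas) ?c0 ` ((\<lambda>c. nat (c - ?c0)) ` {p..q})"
    unfolding Theta_seg_def cut_cell_def image_image ..
  ultimately show ?thesis by simp
qed

lemma strip_segment_staircase_content:
  fixes up :: "int \<Rightarrow> bool"
  assumes "c0 \<le> p" "p \<le> q"
  defines "S \<equiv> normalize (strip_pos up c0 ` {nat (p - c0)..nat (q - c0)})"
  shows "staircase S" and "\<And>z. z \<in> S \<Longrightarrow> p \<le> content (shape_kappa S) p z \<and> content (shape_kappa S) p z \<le> q"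
proof -
  have n01: "nat (p - c0) \<le> nat (q - c0)" using assms by simp
  show st: "staircase S"
    unfolding S_def by (rule staircase_normalize_north_east_segment[OF north_east_path_strip_pos n01])
  fix z assume "z \<in> S"
  then obtain n where "n \<in> {nat (p - c0)..nat (q - c0)}"
    "int (snd z) - int (fst z) + int (shape_rows S) - 1 = int n - int (nat (p - c0))"
    using content_normalize_north_east_segment[OF north_east_path_strip_pos n01]
    unfolding S_def snd_minus_fst_strip_pos by blast
  then show "p \<le> content (shape_kappa S) p z \<and> content (shape_kappa S) p z \<le> q"
    using assms(1,2) by (cases z) (auto simp: content_shape_kappa[OF st])
qed

lemma induced_a_eq:
  "induced_a lam mu r thetas a i j = (\<lambda>\<rho>. a_flag_at mu a (leftmost_of lam mu r
     (content (shape_kappa (hash_cells lam mu r thetas i j)) (hash_p lam r thetas i)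
       (Min {x. (x, \<rho>) \<in> hash_cells lam mu r thetas i j}, \<rho>))))"
  unfolding induced_a_def a_flag_at_def Let_def by simp

lemma induced_b_eq:
  "induced_b lam mu r thetas b i j = (\<lambda>\<rho>. b_flag_at lam b (rightmost_of lam mu r
     (content (shape_kappa (hash_cells lam mu r thetas i j)) (hash_p lam r thetas i)
       (Max {x. (x, \<rho>) \<in> hash_cells lam mu r thetas i j}, \<rho>))))"
  unfolding induced_b_def b_flag_at_def Let_def by simp

theorem proposition5p5:
  fixes lam mu :: "nat list" and r :: int and N :: nat and a b :: "nat \<Rightarrow> int"
    and thetas :: "(nat \<times> nat) set list" and i j :: nat
  assumes "connected_rshape lam mu"
    and "column_flags lam mu N a b"
    and "outer_ribbon_decomp lam mu thetas"
    and "i < length thetas" and "j < length thetas"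
    and "hash_p lam r thetas i \<le> hash_q lam r thetas j"
  shows "column_flags (shape_kappa (hash_cells lam mu r thetas i j))
                      (shape_nu (hash_cells lam mu r thetas i j))
                      (shape_cols (hash_cells lam mu r thetas i j))
                      (induced_a lam mu r thetas a i j)
                      (induced_b lam mu r thetas b i j)"
proof -
  let ?p = "hash_p lam r thetas i" and ?q = "hash_q lam r thetas j"
  let ?S = "hash_cells lam mu r thetas i j"
  have pl: "partition lam" and ec: "edge_connected (skew lam mu)"
    using assms(1) unfolding connected_rshape_def by auto
  have head: "head (thetas ! i) \<in> skew lam mu" and tail: "tail (thetas ! j) \<in> skew lam mu"
    using outer_ribbon_decomp_head_tail_mem[OF assms(3) pl] assms(4,5) by auto
  have c0: "min_content lam mu r \<le> ?p"
    using min_content_le[OF pl head] unfolding hash_p_def .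
  note S = strip_segment_staircase_content[OF c0 assms(6), where up = "content_goes_up lam mu r thetas",
      folded Theta_seg_eq_strip_pos_image[OF c0 assms(6)], folded hash_cells_def]
  have "\<exists>w\<in>skew lam mu. content lam r w = content (shape_kappa ?S) ?p z" if "z \<in> ?S" for z
    using connected_skew_content_ivt[OF ec head tail] S(2)[OF that] unfolding hash_p_def hash_q_def by blast
  then show ?thesis
    unfolding induced_a_eq induced_b_eq by (rule staircase_induced_column_flags[OF assms(1,2) S(1)])
qed

end
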